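(* For every positive integer $n$, $$\sum_{j=1}^{n}\csc^6\left(\frac{\pi j}{2n+1}\right) = \frac{8(n+1)n(8n^4+16n^3+35n^2+27n+54)}{945}.$$ *)

theory Defs
  imports Complex_Main
begin

end

(*
  For 0 < t < pi we have cot t + i = e^(i t) / sin t, so Im ((cot t + i)^(2n+1)) =
  sin ((2n+1) t) / (sin t)^(2n+1) vanishes at t = j pi / (2n+1).  Expanding the power by the
  binomial theorem shows that the n distinct numbers cot^2 (j pi / (2n+1)), 1 <= j <= n, are the
  roots of the degree n polynomial  sum_k (-1)^k C(2n+1, 2k+1) x^(n-k)  with leading coefficient
  2n+1.  By Vieta their elementary symmetric functions are e_k = C(2n, 2k) / (2k+1); Newton's
  identities turn e_1, e_2, e_3 into the sums of cot^2, cot^4 and cot^6, and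
  csc^6 = (1 + cot^2)^3 finishes the computation.
*)

theory Submission
  imports Defs "HOL-Computational_Algebra.Polynomial"
begin

lemma poly_eq_smult_prod_roots:
  fixes p :: "'a::idom poly" and x :: "'b \<Rightarrow> 'a"
  assumes "finite A" "inj_on x A" "\<And>a. a \<in> A \<Longrightarrow> poly p (x a) = 0"
    and "degree p \<le> card A"
  shows "p = smult (coeff p (card A)) (\<Prod>a\<in>A. [:- x a, 1:])"
proof (rule ccontr)
  define q where "q = (\<Prod>a\<in>A. [:- x a, 1:])"
  define r where "r = p - smult (coeff p (card A)) q"
  assume "\<not> ?thesis"
  then have "r \<noteq> 0" by (simp add: r_def q_def)
  have "degree q = card A" "coeff q (card A) = 1"
    using lead_coeff_prod [of "\<lambda>a. [:- x a, 1:]" A] by (simp_all add: q_def degree_prod_sum_eq)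
  then have "coeff r i = 0" if "card A \<le> i" for i
    using that assms(4) by (cases "i = card A") (auto simp: r_def coeff_eq_0)
  then have "degree r < card A"
    using \<open>r \<noteq> 0\<close> leading_coeff_0_iff not_less by blast
  moreover have "card A \<le> degree r"
  proof -
    have "x ` A \<subseteq> {y. poly r y = 0}"
      using assms(1,3) by (auto simp: r_def q_def poly_prod)
    then have "card (x ` A) \<le> card {y. poly r y = 0}"
      using poly_roots_finite [OF \<open>r \<noteq> 0\<close>] by (rule card_mono [rotated])
    also have "\<dots> \<le> degree r"
      using \<open>r \<noteq> 0\<close> by (rule card_poly_roots_bound)
    finally show ?thesis
      using card_image [OF assms(2)] by simp
  qed
  ultimately show False by simp
qed

lemma reflect_poly_linear: "reflect_poly [:a, 1:] = [:1, a:]"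
  for a :: "'a::comm_ring_1"
  by (rule poly_eqI) (simp add: coeff_reflect_poly coeff_pCons split: nat.split)

lemma coeff_prod_insert_one_minus:
  fixes x :: "'b \<Rightarrow> 'a::comm_ring_1"
  assumes "finite A" "b \<notin> A"
  shows "coeff (\<Prod>a\<in>insert b A. [:1, - x a:]) (Suc i) =
    coeff (\<Prod>a\<in>A. [:1, - x a:]) (Suc i) - x b * coeff (\<Prod>a\<in>A. [:1, - x a:]) i"
  using assms by simp

lemma coeff_prod_one_minus_0: "coeff (\<Prod>a\<in>A. [:1, - x a:]) 0 = 1"
  by (simp add: poly_0_coeff_0 [symmetric] poly_prod)

lemma coeff_prod_one_minus_1:
  fixes x :: "'b \<Rightarrow> 'a::comm_ring_1"
  assumes "finite A"
  shows "coeff (\<Prod>a\<in>A. [:1, - x a:]) 1 = - (\<Sum>a\<in>A. x a)"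
  using assms
proof (induction A rule: finite_induct)
  case (insert b A)
  then show ?case
    using coeff_prod_insert_one_minus [OF insert(1,2), of x 0] by (simp add: coeff_prod_one_minus_0)
qed simp

lemma coeff_prod_one_minus_2:
  fixes x :: "'b \<Rightarrow> 'a::field_char_0"
  assumes "finite A"
  shows "coeff (\<Prod>a\<in>A. [:1, - x a:]) 2 = ((\<Sum>a\<in>A. x a)\<^sup>2 - (\<Sum>a\<in>A. x a ^ 2)) / 2"
  using assms
proof (induction A rule: finite_induct)
  case (insert b A)
  have "coeff (\<Prod>a\<in>insert b A. [:1, - x a:]) 2 =
    coeff (\<Prod>a\<in>A. [:1, - x a:]) 2 - x b * coeff (\<Prod>a\<in>A. [:1, - x a:]) 1"
    using coeff_prod_insert_one_minus [OF insert(1,2), of x 1] by (simp only: Suc_1)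
  also have "\<dots> = ((\<Sum>a\<in>insert b A. x a)\<^sup>2 - (\<Sum>a\<in>insert b A. x a ^ 2)) / 2"
    unfolding insert.IH coeff_prod_one_minus_1 [OF insert(1)] sum.insert [OF insert(1,2)]
    by (simp add: field_simps power2_eq_square)
  finally show ?case .
qed simp

lemma coeff_prod_one_minus_3:
  fixes x :: "'b \<Rightarrow> 'a::field_char_0"
  assumes "finite A"
  shows "coeff (\<Prod>a\<in>A. [:1, - x a:]) 3 =
    - ((\<Sum>a\<in>A. x a) ^ 3 - 3 * (\<Sum>a\<in>A. x a) * (\<Sum>a\<in>A. x a ^ 2) + 2 * (\<Sum>a\<in>A. x a ^ 3)) / 6"
  using assms
proof (induction A rule: finite_induct)
  case (insert b A)
  have "coeff (\<Prod>a\<in>insert b A. [:1, - x a:]) 3 =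
    coeff (\<Prod>a\<in>A. [:1, - x a:]) 3 - x b * coeff (\<Prod>a\<in>A. [:1, - x a:]) 2"
    using coeff_prod_insert_one_minus [OF insert(1,2), of x 2]
    by (simp add: numeral_3_eq_3 numeral_2_eq_2)
  also have "\<dots> = - ((\<Sum>a\<in>insert b A. x a) ^ 3
      - 3 * (\<Sum>a\<in>insert b A. x a) * (\<Sum>a\<in>insert b A. x a ^ 2)
      + 2 * (\<Sum>a\<in>insert b A. x a ^ 3)) / 6"
    unfolding insert.IH coeff_prod_one_minus_2 [OF insert(1)] sum.insert [OF insert(1,2)]
    by (simp add: field_simps power2_eq_square power3_eq_cube)
  finally show ?case .
qed simp

lemma real_binomial_eq_prod: "real (m choose k) = (\<Prod>i<k. real m - real i) / fact k"
  by (simp add: binomial_gbinomial gbinomial_prod_rev atLeast0LessThan)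

lemma cot_square_strict_antimono:
  assumes "0 < x" "x < y" "y < pi / 2"
  shows "cot y ^ 2 < cot x ^ 2"
proof -
  have "0 < tan (pi / 2 - y)" "tan (pi / 2 - y) < tan (pi / 2 - x)"
    using assms by (auto intro: tan_gt_zero tan_monotone)
  then show ?thesis by (simp add: tan_cot' power_strict_mono)
qed

lemma inverse_sin_square: "sin x \<noteq> 0 \<Longrightarrow> 1 / sin x ^ 2 = 1 + cot x ^ 2"
  by (simp add: cot_def field_simps power2_eq_square flip: sin_cos_squared_add)

definition cot_poly :: "nat \<Rightarrow> real poly" where
  "cot_poly n = (\<Sum>k\<le>n. monom ((-1) ^ k * real ((2*n+1) choose (2*k+1))) (n - k))"

lemma Im_of_real_plus_i_power:
  "Im ((complex_of_real t + \<i>) ^ (2*n+1)) = poly (cot_poly n) (t\<^sup>2)"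
proof -
  define u where "u k = of_nat ((2*n+1) choose k) * \<i> ^ k * complex_of_real t ^ (2*n+1-k)" for k
  have "(complex_of_real t + \<i>) ^ (2*n+1) = (\<i> + complex_of_real t) ^ (2*n+1)"
    by (simp add: add.commute)
  also have "\<dots> = (\<Sum>k\<le>2*n+1. u k)"
    unfolding u_def by (rule binomial_ring)
  also have "\<dots> = (\<Sum>k\<le>n. u (2*k) + u (Suc (2*k)))"
    using sum.in_pairs_0 [of u n] by simp
  finally have expand: "(complex_of_real t + \<i>) ^ (2*n+1) = (\<Sum>k\<le>n. u (2*k) + u (Suc (2*k)))" .
  have "Im (u (2*k) + u (Suc (2*k))) = (-1) ^ k * real ((2*n+1) choose (2*k+1)) * (t\<^sup>2) ^ (n-k)"
    if "k \<le> n" for k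
  proof -
    have "2*n+1 - Suc (2*k) = 2*(n-k)" using that by simp
    then have "u (Suc (2*k)) =
        \<i> * complex_of_real ((-1) ^ k * real ((2*n+1) choose (2*k+1)) * (t\<^sup>2) ^ (n-k))"
      by (simp add: u_def power_mult)
    moreover have "Im (u (2*k)) = 0"
      by (simp add: u_def power_mult flip: of_real_power)
    ultimately show ?thesis by simp
  qed
  then show ?thesis
    unfolding expand Im_sum cot_poly_def poly_sum poly_monom by (intro sum.cong) auto
qed

lemma coeff_cot_poly:
  "coeff (cot_poly n) i =
    (if i \<le> n then (-1) ^ (n - i) * real ((2*n+1) choose (2*(n-i)+1)) else 0)"
proof -
  have "coeff (cot_poly n) i =
      (\<Sum>k\<le>n. if k = n - i \<and> i \<le> n then (-1) ^ k * real ((2*n+1) choose (2*k+1)) else 0)"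
    unfolding cot_poly_def coeff_sum coeff_monom by (intro sum.cong) auto
  then show ?thesis by simp
qed

lemma degree_cot_poly: "degree (cot_poly n) = n"
  by (rule order.antisym) (auto intro: degree_le le_degree simp: coeff_cot_poly)

lemma coeff_reflect_cot_poly:
  "coeff (reflect_poly (cot_poly n)) k = (-1) ^ k * real ((2*n+1) choose (2*k+1))"
proof (cases "k \<le> n")
  case False
  then have "(2*n+1) choose (2*k+1) = 0"
    by (intro binomial_eq_0) simp
  moreover have "coeff (reflect_poly (cot_poly n)) k = 0"
    using False by (simp add: coeff_reflect_poly degree_cot_poly)
  ultimately show ?thesis
    by (simp only: of_nat_0 mult_zero_right)
qed (simp add: coeff_reflect_poly degree_cot_poly coeff_cot_poly)

lemma poly_cot_poly_cot_square:
  fixes j n :: nat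
  defines "\<theta> \<equiv> pi * real j / real (2*n+1)"
  assumes "sin \<theta> \<noteq> 0"
  shows "poly (cot_poly n) (cot \<theta> ^ 2) = 0"
proof -
  have "complex_of_real (cot \<theta>) + \<i> = cis \<theta> / complex_of_real (sin \<theta>)"
    using assms(2) by (simp add: complex_eq_iff cot_def)
  moreover have "real (2*n+1) * \<theta> = pi * real j"
    by (simp add: \<theta>_def)
  ultimately have "(complex_of_real (cot \<theta>) + \<i>) ^ (2*n+1) =
      cis (pi * real j) / complex_of_real (sin \<theta> ^ (2*n+1))"
    by (simp only: power_divide DeMoivre of_real_power)
  then show ?thesis by (simp flip: Im_of_real_plus_i_power)
qed

lemma pi_mult_div_odd_bounds:
  assumes "1 \<le> j" "j \<le> n"
  shows "0 < pi * real j / real (2*n+1)" "pi * real j / real (2*n+1) < pi / 2"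
proof -
  have "pi * (2 * real j) < pi * real (2*n+1)"
    using assms by (intro mult_strict_left_mono) auto
  then show "pi * real j / real (2*n+1) < pi / 2"
    by (simp add: field_simps)
qed (use assms in simp)

lemma sin_pi_mult_div_odd_gt_0:
  "1 \<le> j \<Longrightarrow> j \<le> n \<Longrightarrow> 0 < sin (pi * real j / real (2*n+1))"
  using pi_mult_div_odd_bounds by (intro sin_gt_zero2) auto

lemma inj_on_cot_square: "inj_on (\<lambda>j. cot (pi * real j / real (2*n+1)) ^ 2) {1..n}"
proof (rule linorder_inj_onI')
  fix i j assume "i \<in> {1..n}" "j \<in> {1..n}" "i < j"
  moreover have "pi * real i / real (2*n+1) < pi * real j / real (2*n+1)"
    using \<open>i < j\<close> by (simp add: divide_strict_right_mono)
  ultimately show "cot (pi * real i / real (2*n+1)) ^ 2 \<noteq> cot (pi * real j / real (2*n+1)) ^ 2"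
    using cot_square_strict_antimono pi_mult_div_odd_bounds
    by (metis atLeastAtMost_iff order.strict_iff_not)
qed

lemma cot_poly_eq_smult_prod:
  "cot_poly n =
    smult (real (2*n+1)) (\<Prod>j=1..n. [:- (cot (pi * real j / real (2*n+1)) ^ 2), 1:])"
proof -
  have "poly (cot_poly n) (cot (pi * real j / real (2*n+1)) ^ 2) = 0" if "j \<in> {1..n}" for j
    using that sin_pi_mult_div_odd_gt_0 [of j n] by (intro poly_cot_poly_cot_square) auto
  then show ?thesis
    using poly_eq_smult_prod_roots [OF _ inj_on_cot_square [of n], where p = "cot_poly n"]
    by (simp add: degree_cot_poly coeff_cot_poly)
qed

(* Reflecting cot_poly puts the k-th elementary symmetric function of the cot^2 values at
   index k, which avoids the truncated index n - k. *)
lemma cot_square_prod_coeff: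
  "coeff (\<Prod>j=1..n. [:1, - (cot (pi * real j / real (2*n+1)) ^ 2):]) k =
    (-1) ^ k * real ((2*n) choose (2*k)) / real (2*k+1)"
proof -
  have cancel: "c = s * b' / m'" if "m * c = s * b" "b * m' = m * b'" "m \<noteq> 0" "m' \<noteq> 0"
    for m m' b b' c s :: real
  proof -
    have "m * (c * m') = m * (s * b')"
      using that(1,2) by (metis mult.assoc mult.left_commute)
    then show ?thesis
      using that(3,4) by (simp add: field_simps)
  qed
  have "real (2*n+1) * coeff (\<Prod>j=1..n. [:1, - (cot (pi * real j / real (2*n+1)) ^ 2):]) k =
      (-1) ^ k * real ((2*n+1) choose (2*k+1))"
    using arg_cong [OF cot_poly_eq_smult_prod [of n], of "\<lambda>p. coeff (reflect_poly p) k"]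
    by (simp add: coeff_reflect_cot_poly reflect_poly_smult reflect_poly_prod reflect_poly_linear)
  moreover have "real ((2*n+1) choose (2*k+1)) * real (2*k+1) =
      real (2*n+1) * real ((2*n) choose (2*k))"
    using Suc_times_binomial_eq [of "2*n" "2*k"] by (simp only: Suc_eq_plus1 flip: of_nat_mult)
  ultimately show ?thesis
    by (rule cancel) simp_all
qed

lemma sum_cot_square:
  "(\<Sum>j=1..n. cot (pi * real j / real (2*n+1)) ^ 2) = real n * (2 * real n - 1) / 3"
proof -
  have "(\<Sum>j=1..n. cot (pi * real j / real (2*n+1)) ^ 2) = real ((2*n) choose 2) / 3"
    using cot_square_prod_coeff [of n 1] unfolding coeff_prod_one_minus_1 [OF finite_atLeastAtMost]
    by simp
  then show ?thesis
    by (simp add: real_binomial_eq_prod lessThan_Suc eval_nat_numeral fact_Suc field_simps)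
qed

lemma sum_cot_power4:
  "(\<Sum>j=1..n. cot (pi * real j / real (2*n+1)) ^ 4) =
    real n * (2 * real n - 1) * (4 * real n ^ 2 + 10 * real n - 9) / 45"
proof -
  let ?S = "\<lambda>k. \<Sum>j=1..n. cot (pi * real j / real (2*n+1)) ^ k"
  have "((?S 2)\<^sup>2 - ?S 4) / 2 = real ((2*n) choose 4) / 5"
    using cot_square_prod_coeff [of n 2] unfolding coeff_prod_one_minus_2 [OF finite_atLeastAtMost]
    by (simp flip: power_mult)
  then have S4: "?S 4 = (?S 2)\<^sup>2 - 2 * real ((2*n) choose 4) / 5"
    by simp
  show ?thesis
    unfolding S4 sum_cot_square
    by (simp add: real_binomial_eq_prod lessThan_Suc eval_nat_numeral fact_Suc field_simps)
qed

lemma sum_cot_power6: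
  "(\<Sum>j=1..n. cot (pi * real j / real (2*n+1)) ^ 6) =
    real n * (2 * real n - 1) *
      (32 * real n ^ 4 + 112 * real n ^ 3 + 8 * real n ^ 2 - 252 * real n + 135) / 945"
proof -
  let ?S = "\<lambda>k. \<Sum>j=1..n. cot (pi * real j / real (2*n+1)) ^ k"
  have "- ((?S 2) ^ 3 - 3 * ?S 2 * ?S 4 + 2 * ?S 6) / 6 = - real ((2*n) choose 6) / 7"
    using cot_square_prod_coeff [of n 3] unfolding coeff_prod_one_minus_3 [OF finite_atLeastAtMost]
    by (simp flip: power_mult)
  then have S6: "?S 6 = (6 * real ((2*n) choose 6) / 7 - (?S 2) ^ 3 + 3 * ?S 2 * ?S 4) / 2"
    by (simp add: field_simps)
  show ?thesis
    unfolding S6 sum_cot_square sum_cot_power4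
    by (simp add: real_binomial_eq_prod lessThan_Suc eval_nat_numeral fact_Suc field_simps)
qed

theorem mainTheorem13:
  fixes n :: nat
  assumes "n \<ge> 1"
  shows "(\<Sum>j=1..n. 1 / (sin (pi * real j / real (2*n+1))) ^ 6)
         = 8 * (real n + 1) * real n * (8 * real n ^ 4 + 16 * real n ^ 3 + 35 * real n ^ 2 + 27 * real n + 54) / 945"
proof -
  let ?cot = "\<lambda>j. cot (pi * real j / real (2*n+1))"
  have "1 / sin (pi * real j / real (2*n+1)) ^ 6 = 1 + 3 * ?cot j ^ 2 + 3 * ?cot j ^ 4 + ?cot j ^ 6"
    if "j \<in> {1..n}" for j
  proof -
    have "1 / sin (pi * real j / real (2*n+1)) ^ 6 = (1 + ?cot j ^ 2) ^ 3"
      using that sin_pi_mult_div_odd_gt_0 [of j n]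
      by (simp add: power_one_over flip: inverse_sin_square power_mult)
    also have "\<dots> = 1 + 3 * ?cot j ^ 2 + 3 * ?cot j ^ 4 + ?cot j ^ 6"
      by algebra
    finally show ?thesis .
  qed
  then have "(\<Sum>j=1..n. 1 / (sin (pi * real j / real (2*n+1))) ^ 6) =
      real n + 3 * (\<Sum>j=1..n. ?cot j ^ 2) + 3 * (\<Sum>j=1..n. ?cot j ^ 4) + (\<Sum>j=1..n. ?cot j ^ 6)"
    by (simp add: sum.distrib sum_distrib_left)
  then show ?thesis
    unfolding sum_cot_square sum_cot_power4 sum_cot_power6
    by (simp add: field_simps power2_eq_square power3_eq_cube eval_nat_numeral)
qed

end
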